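(* Let $\mathbb{H}$ be a finite dimensional real Hilbert space, let $C\subseteq\mathbb{H}$ be a closed convex cone with dual cone $C^*:=\{y\in\mathbb{H}:\langle y,x\rangle\ge0\ \forall x\in C\}$, and let $f:C\to\mathbb{H}$ be a weakly homogeneous map of degree $\gamma>0$ with leading term $f^\infty$. Let $F:\mathbb{H}\to\mathbb{H}$ be a given continuous extension of $f$ and $F_C^{\mathrm{nat}}(x):=x-\Pi_C(x-F(x))$. Suppose: (a) $f^\infty$ is copositive on $C$; (b) for $x\in C$ with $\|x\|$ sufficiently large, there exists no $c>0$ such that $-x=c\,(f(x)-f^\infty(x))$; (c) $\lim_{x\in C,\|x\|\to\infty}\|F_C^{\mathrm{nat}}(x)\|=\infty$, and $\|f(x)-f^\infty(x)\|\le\|F_C^{\mathrm{nat}}(x)\|$ for all $x\in C$ with $\|x\|$ sufficiently large; (d) for all $x\in C$, $y\in C^*$ with $\langle x,y\rangle=0$, one has $\langle f(x),y\rangle\le 0$. Then for every $q\in C$, the equation $f(x)=q$ has a solution $x\in C$.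
   Context: A continuous map $h:C\to\mathbb{H}$ is positively homogeneous of degree $\gamma\ge 0$ if $h(\lambda x)=\lambda^\gamma h(x)$ for all $x\in C$, $\lambda>0$. A map $f:C\to\mathbb{H}$ is weakly homogeneous of degree $\gamma$ if $f=h+g$ where $h$ is continuous and positively homogeneous of degree $\gamma$ on $C$ and $g$ is continuous on $C$ with $\lim_{x\in C,\|x\|\to\infty} g(x)/\|x\|^\gamma=0$; the leading term is $f^\infty:=h$. A map $\psi$ is copositive on a set $D$ if $\langle \psi(x)-\psi(0),x\rangle\ge 0$ for all $x\in D$. $\Pi_C$ denotes the orthogonal projection onto $C$. *)

theory Defs
  imports "HOL-Analysis.Analysis"
begin

definition pos_homogeneous_on :: "'a::real_normed_vector set \<Rightarrow> real \<Rightarrow> ('a \<Rightarrow> 'a) \<Rightarrow> bool" where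
  "pos_homogeneous_on C \<gamma> h \<longleftrightarrow>
     (\<forall>x\<in>C. \<forall>t>0. h (t *\<^sub>R x) = (t powr \<gamma>) *\<^sub>R h x)"

definition weakly_homogeneous_with :: "'a::real_normed_vector set \<Rightarrow> real \<Rightarrow> ('a \<Rightarrow> 'a) \<Rightarrow> ('a \<Rightarrow> 'a) \<Rightarrow> bool" where
  "weakly_homogeneous_with C \<gamma> f h \<longleftrightarrow>
     (\<exists>g. (\<forall>x\<in>C. f x = h x + g x) \<and>
          continuous_on C h \<and> pos_homogeneous_on C \<gamma> h \<and>
          continuous_on C g \<and>
          ((\<lambda>x. (1 / norm x powr \<gamma>) *\<^sub>R g x) \<longlongrightarrow> 0) (inf at_infinity (principal C)))"

definition copositive_on :: "'a::real_inner set \<Rightarrow> ('a \<Rightarrow> 'a) \<Rightarrow> bool" where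
  "copositive_on D \<psi> \<longleftrightarrow> (\<forall>x\<in>D. inner (\<psi> x - \<psi> 0) x \<ge> 0)"

definition dual_cone :: "'a::real_inner set \<Rightarrow> 'a set" where
  "dual_cone C = {y. \<forall>x\<in>C. inner y x \<ge> 0}"

definition natural_map :: "'a::euclidean_space set \<Rightarrow> ('a \<Rightarrow> 'a) \<Rightarrow> 'a \<Rightarrow> 'a" where
  "natural_map C F x = x - closest_point C (x - F x)"

end

theory Submission
  imports Defs
begin

(* Zeros of the natural map x - Pi_C (x - G x) are the solutions of the complementarity problem
   x \<in> C, G x \<in> C*, <x, G x> = 0.  For G x = a x + b f x - p with a, b \<ge> 0 and p \<in> C,
   hypothesis (d) gives <G x, G x> \<le> 0, so such a solution solves a x + b f x = p.
   On a large sphere, the natural map of F is joined to the identity through the natural maps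
   of (1 - t) x + t F x, and to the natural map of F - q through those of F - s q, all without
   zeros on the sphere: a zero of the first family gives f x = -c x, which (a) and (c) turn into
   the eigenvector excluded by (b); a zero of the second contradicts |F_nat x| > |q|, because
   Pi_C is 1-Lipschitz.  Finally, a map homotopic to the identity on a sphere within the
   punctured space vanishes in the ball, for otherwise the sphere would be contractible. *)

lemma pos_homogeneous_on_0:
  assumes "pos_homogeneous_on C \<gamma> h" "0 \<in> C" "\<gamma> \<noteq> 0"
  shows "h 0 = 0"
proof -
  have "h 0 = (2 powr \<gamma>) *\<^sub>R h 0"
    using assms(1,2) unfolding pos_homogeneous_on_def by (metis scaleR_zero_right zero_less_numeral)
  moreover have "2 powr \<gamma> \<noteq> (1::real)" using assms(3) by simp
  ultimately show ?thesis by (metis scaleR_cancel_right scaleR_one)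
qed

lemma inner_nonneg_norm_add_le_imp_0:
  fixes v w :: "'a::real_inner"
  assumes "inner v w \<ge> 0" "norm (v + w) \<le> norm v"
  shows "w = 0"
proof -
  have "(norm (v + w))\<^sup>2 \<le> (norm v)\<^sup>2"
    using assms(2) by (simp add: power_mono)
  moreover have "(norm w)\<^sup>2 = (norm (v + w))\<^sup>2 - (norm v)\<^sup>2 - 2 * inner v w"
    using dot_norm[of v w] by simp
  ultimately have "(norm w)\<^sup>2 \<le> 0" using assms(1) by linarith
  then show ?thesis by simp
qed

lemma eventually_at_infinity_principal_sphere:
  assumes "\<forall>\<^sub>F x in inf at_infinity (principal C). P x"
  obtains R :: real where "R > 0" "\<And>x. x \<in> C \<Longrightarrow> norm x = R \<Longrightarrow> P x"
proof -
  obtain R0 where "\<And>x. norm x \<ge> R0 \<Longrightarrow> x \<in> C \<Longrightarrow> P x"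
    using assms by (auto simp: eventually_inf_principal eventually_at_infinity)
  then show thesis by (intro that[of "max 1 R0"]) auto
qed

lemma homotopic_id_on_sphere_imp_zero:
  fixes \<Phi> :: "'a::euclidean_space \<Rightarrow> 'a"
  assumes R: "R > 0"
    and hom: "homotopic_with_canon (\<lambda>_. True) (sphere 0 R) (- {0}) id \<Phi>"
    and cont: "continuous_on (cball 0 R) \<Phi>"
  shows "\<exists>x\<in>cball 0 R. \<Phi> x = 0"
proof (rule ccontr)
  assume "\<not> ?thesis"
  then have "\<Phi> ` cball 0 R \<subseteq> - {0}" by auto
  then obtain c where "homotopic_with_canon (\<lambda>_. True) (sphere 0 R) (- {0}) \<Phi> (\<lambda>x. c)"
    using nullhomotopic_from_sphere_extension[where S="- {0}" and f=\<Phi> and a=0 and r=R] cont by blast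
  with hom have id_null: "homotopic_with_canon (\<lambda>_. True) (sphere 0 R) (- {0}) id (\<lambda>x. c)"
    by (rule homotopic_with_trans)
  define r where "r = (\<lambda>x::'a. (R / norm x) *\<^sub>R x)"
  have "continuous_on (- {0}) r" unfolding r_def
    by (intro continuous_intros) auto
  moreover have "r \<in> (- {0}) \<rightarrow> sphere 0 R" unfolding r_def using R by auto
  ultimately have "homotopic_with_canon (\<lambda>_. True) (sphere 0 R) (sphere 0 R) (r \<circ> id) (r \<circ> (\<lambda>x. c))"
    using id_null by (intro homotopic_with_compose_continuous_left) auto
  moreover have "homotopic_with_canon (\<lambda>_. True) (sphere 0 R) (sphere 0 R) id (r \<circ> id)"
    by (rule homotopic_with_equal) (auto simp: r_def)
  ultimately have "homotopic_with_canon (\<lambda>_. True) (sphere 0 R) (sphere 0 R) id (\<lambda>x. r c)"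
    by (auto dest: homotopic_with_trans simp: o_def)
  then have "contractible (sphere (0::'a) R)" unfolding contractible_def by blast
  then show False using R by (simp add: contractible_sphere)
qed

lemma natural_map_eq_0_imp_complementarity:
  fixes C :: "'a::euclidean_space set"
  assumes C: "closed C" "convex_cone C" and zero: "natural_map C G x = 0"
  shows "x \<in> C" "G x \<in> dual_cone C" "inner x (G x) = 0"
proof -
  have cvx: "convex C" and cn: "conic C" and ne: "C \<noteq> {}" using C(2) by (auto simp: convex_cone_def)
  have proj: "closest_point C (x - G x) = x" using zero by (simp add: natural_map_def)
  show xC: "x \<in> C" using closest_point_in_set[OF C(1) ne, of "x - G x"] proj by simp
  have "\<forall>z\<in>C. dist (x - G x) x \<le> dist (x - G x) z"
    using closest_point_le[OF C(1)] proj by metis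
  from any_closest_point_dot[OF cvx C(1) xC _ this]
  have variational: "inner (G x) (z - x) \<ge> 0" if "z \<in> C" for z
    using that by (simp add: inner_minus_left)
  have "inner (G x) (0 - x) \<ge> 0"
    using variational convex_cone_contains_0[OF C(2)] .
  moreover have "inner (G x) (2 *\<^sub>R x - x) \<ge> 0"
    using variational conicD[OF cn xC, of 2] by simp
  ultimately show orth: "inner x (G x) = 0" by (simp add: inner_commute algebra_simps inner_diff_right)
  have "inner (G x) z \<ge> 0" if "z \<in> C" for z
    using variational[of "x + z"] convex_cone_add[OF C(2) xC that] orth
    by (simp add: inner_commute inner_add_right)
  then show "G x \<in> dual_cone C" by (simp add: dual_cone_def)
qed

lemma natural_map_affine_eq_0_imp_eq:
  fixes C :: "'a::euclidean_space set" and f G :: "'a \<Rightarrow> 'a"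
  assumes C: "closed C" "convex_cone C"
    and d: "\<forall>x\<in>C. \<forall>y\<in>dual_cone C. inner x y = 0 \<longrightarrow> inner (f x) y \<le> 0"
    and G: "\<forall>z\<in>C. G z = a *\<^sub>R z + b *\<^sub>R f z - p"
    and ab: "a \<ge> 0" "b \<ge> 0" and pC: "p \<in> C"
    and zero: "natural_map C G x = 0"
  shows "x \<in> C" "a *\<^sub>R x + b *\<^sub>R f x = p"
proof -
  show xC: "x \<in> C" by (rule natural_map_eq_0_imp_complementarity(1)[OF C zero])
  define y where "y = a *\<^sub>R x + b *\<^sub>R f x - p"
  have yD: "y \<in> dual_cone C" and xy: "inner x y = 0"
    using natural_map_eq_0_imp_complementarity(2,3)[OF C zero] G xC by (simp_all add: y_def)
  have "b * inner (f x) y \<le> 0"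
    using d xC yD xy ab(2) by (simp add: mult_nonneg_nonpos)
  moreover have "inner p y \<ge> 0" using yD pC by (simp add: dual_cone_def inner_commute)
  moreover have "inner y y = a * inner x y + b * inner (f x) y - inner p y"
    by (simp add: y_def inner_add_left inner_diff_left)
  ultimately have "inner y y \<le> 0" using xy by simp
  then have "y = 0" by (metis inner_gt_zero_iff not_le)
  then show "a *\<^sub>R x + b *\<^sub>R f x = p" by (simp add: y_def)
qed

lemma continuous_on_natural_map:
  assumes "convex C" "closed C" "C \<noteq> {}" "continuous_on UNIV G"
  shows "continuous_on S (natural_map C G)"
  unfolding natural_map_def
  by (intro continuous_intros continuous_on_compose2[OF continuous_on_closest_point[OF assms(1-3)]]
      continuous_on_compose2[OF assms(4)]) auto

lemma homotopic_natural_maps: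
  fixes G :: "real \<Rightarrow> 'a::euclidean_space \<Rightarrow> 'a"
  assumes C: "convex C" "closed C" "C \<noteq> {}"
    and G: "continuous_on ({0..1} \<times> S) (\<lambda>z. G (fst z) (snd z))"
    and nz: "\<And>t x. t \<in> {0..1} \<Longrightarrow> x \<in> S \<Longrightarrow> natural_map C (G t) x \<noteq> 0"
  shows "homotopic_with_canon (\<lambda>_. True) S (- {0}) (natural_map C (G 0)) (natural_map C (G 1))"
  unfolding homotopic_with_def
proof (intro exI conjI)
  let ?h = "\<lambda>z. natural_map C (G (fst z)) (snd z)"
  have "continuous_on ({0..1} \<times> S) ?h"
    unfolding natural_map_def
    by (intro continuous_intros continuous_on_compose2[OF continuous_on_closest_point[OF C]] G)
      auto
  then show "continuous_map (prod_topology (top_of_set {0..1}) (top_of_set S)) (top_of_set (- {0})) ?h"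
    using nz by (auto simp: subtopology_Times[symmetric])
qed auto

lemma natural_map_convex_homotopy_ne_0:
  fixes C :: "'a::euclidean_space set" and f F finf :: "'a \<Rightarrow> 'a"
  assumes C: "closed C" "convex_cone C"
    and d: "\<forall>x\<in>C. \<forall>y\<in>dual_cone C. inner x y = 0 \<longrightarrow> inner (f x) y \<le> 0"
    and Fext: "\<forall>x\<in>C. F x = f x"
    and cop: "copositive_on C finf" "finf 0 = 0"
    and no_eigen: "x \<in> C \<Longrightarrow> \<not> (\<exists>c>0. - x = c *\<^sub>R (f x - finf x))"
    and dominated: "x \<in> C \<Longrightarrow> norm (f x - finf x) \<le> norm (natural_map C F x)"
    and nat_ne_0: "x \<in> C \<Longrightarrow> natural_map C F x \<noteq> 0"
    and "x \<noteq> 0" "t \<in> {0..1}"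
  shows "natural_map C (\<lambda>z. (1 - t) *\<^sub>R z + t *\<^sub>R F z) x \<noteq> 0"
proof
  assume zero: "natural_map C (\<lambda>z. (1 - t) *\<^sub>R z + t *\<^sub>R F z) x = 0"
  have "\<forall>z\<in>C. (1 - t) *\<^sub>R z + t *\<^sub>R F z = (1 - t) *\<^sub>R z + t *\<^sub>R f z - 0" using Fext by simp
  from natural_map_affine_eq_0_imp_eq[OF C d this _ _ convex_cone_contains_0[OF C(2)] zero] \<open>t \<in> {0..1}\<close>
  have xC: "x \<in> C" and comb: "(1 - t) *\<^sub>R x + t *\<^sub>R f x = 0" by simp_all
  with \<open>x \<noteq> 0\<close> \<open>t \<in> {0..1}\<close> have "t > 0" by (cases "t = 0") auto
  define c where "c = (1 - t) / t"
  have "c \<ge> 0" using \<open>t > 0\<close> \<open>t \<in> {0..1}\<close> by (simp add: c_def)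
  have fx: "f x = - c *\<^sub>R x"
  proof -
    have "t *\<^sub>R f x = - ((1 - t) *\<^sub>R x)" using comb by (simp add: eq_neg_iff_add_eq_0 add.commute)
    then have "inverse t *\<^sub>R (t *\<^sub>R f x) = inverse t *\<^sub>R - ((1 - t) *\<^sub>R x)" by simp
    with \<open>t > 0\<close> show ?thesis by (simp add: c_def divide_inverse mult.commute)
  qed
  have "(1 + c) *\<^sub>R x \<in> C" using conicD[of C x "1 + c"] C(2) xC \<open>c \<ge> 0\<close> by (simp add: convex_cone_def)
  then have nat: "natural_map C F x = - c *\<^sub>R x"
    using Fext xC fx by (simp add: natural_map_def closest_point_self algebra_simps)
  have "c \<noteq> 0" using nat_ne_0[OF xC] nat by auto
  with \<open>c \<ge> 0\<close> have "c > 0" by simp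
  have "inner (c *\<^sub>R x) (finf x) \<ge> 0"
    using cop xC \<open>c \<ge> 0\<close> by (simp add: copositive_on_def inner_commute)
  moreover have "norm (c *\<^sub>R x + finf x) \<le> norm (c *\<^sub>R x)"
  proof -
    have "f x - finf x = - (c *\<^sub>R x + finf x)" by (simp add: fx)
    then have "norm (c *\<^sub>R x + finf x) = norm (f x - finf x)" by (simp only: norm_minus_cancel)
    also have "\<dots> \<le> norm (c *\<^sub>R x)" using dominated[OF xC] nat by simp
    finally show ?thesis .
  qed
  ultimately have "finf x = 0" by (rule inner_nonneg_norm_add_le_imp_0)
  then have "- x = (1 / c) *\<^sub>R (f x - finf x)" using fx \<open>c > 0\<close> by simp
  moreover have "1 / c > 0" using \<open>c > 0\<close> by simp
  ultimately show False using no_eigen[OF xC] by blast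
qed

lemma natural_map_shift_ne_0:
  fixes C :: "'a::euclidean_space set" and f F :: "'a \<Rightarrow> 'a"
  assumes C: "closed C" "convex_cone C"
    and d: "\<forall>x\<in>C. \<forall>y\<in>dual_cone C. inner x y = 0 \<longrightarrow> inner (f x) y \<le> 0"
    and Fext: "\<forall>x\<in>C. F x = f x"
    and "q \<in> C" "s \<in> {0..1}"
    and large: "x \<in> C \<Longrightarrow> norm q < norm (natural_map C F x)"
  shows "natural_map C (\<lambda>z. F z - s *\<^sub>R q) x \<noteq> 0"
proof
  have cvx: "convex C" and ne: "C \<noteq> {}" using C(2) by (auto simp: convex_cone_def)
  assume zero: "natural_map C (\<lambda>z. F z - s *\<^sub>R q) x = 0"
  have sqC: "s *\<^sub>R q \<in> C" using C(2) \<open>q \<in> C\<close> \<open>s \<in> {0..1}\<close> by (simp add: convex_cone_def conicD)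
  have "\<forall>z\<in>C. F z - s *\<^sub>R q = 0 *\<^sub>R z + 1 *\<^sub>R f z - s *\<^sub>R q" using Fext by simp
  from natural_map_affine_eq_0_imp_eq[OF C d this order_refl zero_le_one sqC zero]
  have xC: "x \<in> C" and "f x = s *\<^sub>R q" by simp_all
  then have "natural_map C F x = closest_point C x - closest_point C (x - s *\<^sub>R q)"
    using Fext by (simp add: natural_map_def closest_point_self)
  then have "norm (natural_map C F x) = dist (closest_point C x) (closest_point C (x - s *\<^sub>R q))"
    by (simp add: dist_norm)
  also have "\<dots> \<le> dist x (x - s *\<^sub>R q)" by (rule closest_point_lipschitz[OF cvx C(1) ne])
  also have "\<dots> \<le> norm q" using \<open>s \<in> {0..1}\<close> by (simp add: dist_norm mult_left_le_one_le)
  finally show False using large[OF xC] by simp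
qed

lemma homotopic_id_natural_map:
  fixes C :: "'a::euclidean_space set" and f F finf :: "'a \<Rightarrow> 'a"
  assumes C: "closed C" "convex_cone C"
    and d: "\<forall>x\<in>C. \<forall>y\<in>dual_cone C. inner x y = 0 \<longrightarrow> inner (f x) y \<le> 0"
    and Fcont: "continuous_on UNIV F" and Fext: "\<forall>x\<in>C. F x = f x"
    and cop: "copositive_on C finf" "finf 0 = 0"
    and "R > 0"
    and far: "\<And>x. x \<in> C \<Longrightarrow> norm x = R \<Longrightarrow> natural_map C F x \<noteq> 0 \<and>
      \<not> (\<exists>c>0. - x = c *\<^sub>R (f x - finf x)) \<and> norm (f x - finf x) \<le> norm (natural_map C F x)"
  shows "homotopic_with_canon (\<lambda>_. True) (sphere 0 R) (- {0}) id (natural_map C F)"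
proof -
  have cvx: "convex C" and ne: "C \<noteq> {}" using C(2) by (auto simp: convex_cone_def)
  have "homotopic_with_canon (\<lambda>_. True) (sphere 0 R) (- {0})
      (natural_map C (\<lambda>z. (1 - 0) *\<^sub>R z + 0 *\<^sub>R F z)) (natural_map C (\<lambda>z. (1 - 1) *\<^sub>R z + 1 *\<^sub>R F z))"
  proof (rule homotopic_natural_maps[OF cvx C(1) ne])
    show "continuous_on ({0..1} \<times> sphere 0 R) (\<lambda>z. (1 - fst z) *\<^sub>R snd z + fst z *\<^sub>R F (snd z))"
      by (intro continuous_intros continuous_on_compose2[OF Fcont]) auto
    show "natural_map C (\<lambda>z. (1 - t) *\<^sub>R z + t *\<^sub>R F z) x \<noteq> 0" if "t \<in> {0..1}" "x \<in> sphere 0 R" for t x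
      using natural_map_convex_homotopy_ne_0[OF C d Fext cop] far[of x] that \<open>R > 0\<close> by force
  qed
  moreover have "natural_map C (\<lambda>z. (1 - 0) *\<^sub>R z + 0 *\<^sub>R F z) = id"
    using convex_cone_contains_0[OF C(2)] by (auto simp: natural_map_def closest_point_self)
  ultimately show ?thesis by simp
qed

lemma homotopic_natural_map_shift:
  fixes C :: "'a::euclidean_space set" and f F :: "'a \<Rightarrow> 'a"
  assumes C: "closed C" "convex_cone C"
    and d: "\<forall>x\<in>C. \<forall>y\<in>dual_cone C. inner x y = 0 \<longrightarrow> inner (f x) y \<le> 0"
    and Fcont: "continuous_on UNIV F" and Fext: "\<forall>x\<in>C. F x = f x"
    and "q \<in> C"
    and far: "\<And>x. x \<in> C \<Longrightarrow> norm x = R \<Longrightarrow> norm q < norm (natural_map C F x)"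
  shows "homotopic_with_canon (\<lambda>_. True) (sphere 0 R) (- {0}) (natural_map C F) (natural_map C (\<lambda>z. F z - q))"
proof -
  have cvx: "convex C" and ne: "C \<noteq> {}" using C(2) by (auto simp: convex_cone_def)
  have "homotopic_with_canon (\<lambda>_. True) (sphere 0 R) (- {0})
      (natural_map C (\<lambda>z. F z - 0 *\<^sub>R q)) (natural_map C (\<lambda>z. F z - 1 *\<^sub>R q))"
  proof (rule homotopic_natural_maps[OF cvx C(1) ne])
    show "continuous_on ({0..1} \<times> sphere 0 R) (\<lambda>z. F (snd z) - fst z *\<^sub>R q)"
      by (intro continuous_intros continuous_on_compose2[OF Fcont]) auto
    show "natural_map C (\<lambda>z. F z - s *\<^sub>R q) x \<noteq> 0" if "s \<in> {0..1}" "x \<in> sphere 0 R" for s x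
      using natural_map_shift_ne_0[OF C d Fext \<open>q \<in> C\<close>] far[of x] that by force
  qed
  then show ?thesis by simp
qed

theorem corollary3p1:
  fixes C :: "'a::euclidean_space set"
    and f F finf :: "'a \<Rightarrow> 'a"
    and \<gamma> :: real
  assumes cone: "closed C" "convex_cone C"
    and gamma: "\<gamma> > 0"
    and whom: "weakly_homogeneous_with C \<gamma> f finf"
    and Fcont: "continuous_on UNIV F"
    and Fext: "\<forall>x\<in>C. F x = f x"
    and a: "copositive_on C finf"
    and b: "\<exists>R. \<forall>x\<in>C. norm x \<ge> R \<longrightarrow> \<not> (\<exists>c>0. - x = c *\<^sub>R (f x - finf x))"
    and c1: "filterlim (\<lambda>x. norm (natural_map C F x)) at_top (inf at_infinity (principal C))"
    and c2: "\<exists>R. \<forall>x\<in>C. norm x \<ge> R \<longrightarrow> norm (f x - finf x) \<le> norm (natural_map C F x)"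
    and d: "\<forall>x\<in>C. \<forall>y\<in>dual_cone C. inner x y = 0 \<longrightarrow> inner (f x) y \<le> 0"
  shows "\<forall>q\<in>C. \<exists>x\<in>C. f x = q"
proof
  fix q assume "q \<in> C"
  have cvx: "convex C" and ne: "C \<noteq> {}" and "0 \<in> C"
    using cone(2) convex_cone_contains_0 by (auto simp: convex_cone_def)
  have "finf 0 = 0"
    using whom pos_homogeneous_on_0 \<open>0 \<in> C\<close> gamma by (auto simp: weakly_homogeneous_with_def)
  have "\<forall>\<^sub>F x in inf at_infinity (principal C). norm q < norm (natural_map C F x)"
    using c1 by (simp add: filterlim_at_top_dense)
  moreover have "\<forall>\<^sub>F x in inf at_infinity (principal C). \<not> (\<exists>c>0. - x = c *\<^sub>R (f x - finf x))"
    using b by (auto simp: eventually_inf_principal eventually_at_infinity)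
  moreover have "\<forall>\<^sub>F x in inf at_infinity (principal C). norm (f x - finf x) \<le> norm (natural_map C F x)"
    using c2 by (auto simp: eventually_inf_principal eventually_at_infinity)
  ultimately have "\<forall>\<^sub>F x in inf at_infinity (principal C). norm q < norm (natural_map C F x) \<and>
      \<not> (\<exists>c>0. - x = c *\<^sub>R (f x - finf x)) \<and> norm (f x - finf x) \<le> norm (natural_map C F x)"
    by (intro eventually_conj)
  then obtain R where "R > 0" and far: "\<And>x. x \<in> C \<Longrightarrow> norm x = R \<Longrightarrow> norm q < norm (natural_map C F x) \<and>
      \<not> (\<exists>c>0. - x = c *\<^sub>R (f x - finf x)) \<and> norm (f x - finf x) \<le> norm (natural_map C F x)"
    by (erule eventually_at_infinity_principal_sphere)
  have "homotopic_with_canon (\<lambda>_. True) (sphere 0 R) (- {0}) id (natural_map C F)"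
    by (rule homotopic_id_natural_map[OF cone d Fcont Fext a \<open>finf 0 = 0\<close> \<open>R > 0\<close>])
      (use far in fastforce)
  moreover have "homotopic_with_canon (\<lambda>_. True) (sphere 0 R) (- {0})
      (natural_map C F) (natural_map C (\<lambda>z. F z - q))"
    by (rule homotopic_natural_map_shift[OF cone d Fcont Fext \<open>q \<in> C\<close>])
      (use far in fastforce)
  ultimately have "homotopic_with_canon (\<lambda>_. True) (sphere 0 R) (- {0}) id (natural_map C (\<lambda>z. F z - q))"
    by (rule homotopic_with_trans)
  moreover have "continuous_on (cball 0 R) (natural_map C (\<lambda>z. F z - q))"
    using Fcont by (intro continuous_on_natural_map[OF cvx cone(1) ne] continuous_intros)
  ultimately have "\<exists>x\<in>cball 0 R. natural_map C (\<lambda>z. F z - q) x = 0"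
    by (rule homotopic_id_on_sphere_imp_zero[OF \<open>R > 0\<close>])
  then obtain x where zero: "natural_map C (\<lambda>z. F z - q) x = 0" by blast
  have "\<forall>z\<in>C. F z - q = 0 *\<^sub>R z + 1 *\<^sub>R f z - q" using Fext by simp
  from natural_map_affine_eq_0_imp_eq[OF cone d this order_refl zero_le_one \<open>q \<in> C\<close> zero]
  show "\<exists>x\<in>C. f x = q" by auto
qed

end
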